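(* Let $\Sigma$ be a finite alphabet and $\mathsf{X} \in \{\mathsf{F},\mathsf{V}\}$. A regular language $L \subseteq \Sigma^*$ belongs to $\mathsf{X}(\mathcal{O}(\log n))$ if and only if $L^\mathsf{R}$ is recognized by a well-behaved DFA.
   Context: $L^\mathsf{R}$ is the set of reversals of words of $L$. A DFA $(Q,\Sigma,q_0,\delta,F)$ is well-behaved if every strongly connected component $C$ (inclusion-maximal set of mutually reachable states) reachable from $q_0$ satisfies: for all $q\in C$ and $u,v\in\Sigma^*$ with $|u|=|v|$ and $\delta(q,u),\delta(q,v)\in C$, $\delta(q,u)\in F\iff\delta(q,v)\in F$. A streaming algorithm is a deterministic (possibly infinite-state) automaton with an injective encoding of states into bit strings. Fixed-size: fix $a\in\Sigma$, $\mathrm{last}_n(a_1\cdots a_m)=a_{m-n+1}\cdots a_m$ if $n\le m$, else $a^{n-m}a_1\cdots a_m$; a fixed-size sliding window algorithm for $L$ is $(\mathcal{A}_n)_{n\ge0}$ with $\mathcal{A}_n$ accepting $\{w:\mathrm{last}_n(w)\in L\}$, space at $n$ = maximal encoding length of a state of $\mathcal{A}_n$. Variable-size: over $\Sigma\cup\{\downarrow\}$, the window is maintained by appending symbols of $\Sigma$ and letting $\downarrow$ delete the first window symbol (if any); an algorithm accepts the streams whose window lies in $L$, and its space at $n$ is the maximal encoding length of a state visited on a stream during which the window length never exceeds $n$. $\mathsf{F}(\mathcal{O}(\log n))$ / $\mathsf{V}(\mathcal{O}(\log n))$: languages with a fixed-size / variable-size algorithm of space $\mathcal{O}(\log n)$.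 *)

theory Defs
  imports Main "HOL-Library.Extended_Nat" Complex_Main
begin

record ('s, 'b) aut =
  states :: "'s set"
  init   :: 's
  trans  :: "'s \<Rightarrow> 'b \<Rightarrow> 's"
  acc    :: "'s set"

definition wf_aut :: "('s, 'b) aut \<Rightarrow> bool" where
  "wf_aut A \<longleftrightarrow> init A \<in> states A \<and> (\<forall>q\<in>states A. \<forall>b. trans A q b \<in> states A)
                 \<and> acc A \<subseteq> states A"

definition run :: "('s, 'b) aut \<Rightarrow> 's \<Rightarrow> 'b list \<Rightarrow> 's" where
  "run A q w = foldl (trans A) q w"

definition lang :: "('s, 'b) aut \<Rightarrow> 'b list set" where
  "lang A = {w. run A (init A) w \<in> acc A}"

definition dfa :: "('s, 'b) aut \<Rightarrow> bool" where
  "dfa A \<longleftrightarrow> wf_aut A \<and> finite (states A)"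

text \<open>Regular: recognised by a DFA (states w.l.o.g. numbered by naturals).\<close>
definition regular :: "'b list set \<Rightarrow> bool" where
  "regular L \<longleftrightarrow> (\<exists>A :: (nat, 'b) aut. dfa A \<and> lang A = L)"

definition rev_lang :: "'b list set \<Rightarrow> 'b list set" where
  "rev_lang L = rev ` L"

definition reach :: "('s, 'b) aut \<Rightarrow> 's \<Rightarrow> 's \<Rightarrow> bool" where
  "reach A p q \<longleftrightarrow> (\<exists>w. run A p w = q)"

definition mutually_reachable :: "('s, 'b) aut \<Rightarrow> 's set \<Rightarrow> bool" where
  "mutually_reachable A C \<longleftrightarrow> (\<forall>p\<in>C. \<forall>q\<in>C. reach A p q)"

definition is_scc :: "('s, 'b) aut \<Rightarrow> 's set \<Rightarrow> bool" where
  "is_scc A C \<longleftrightarrow> C \<subseteq> states A \<and> mutually_reachable A C \<and>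
     (\<forall>D. C \<subseteq> D \<and> D \<subseteq> states A \<and> mutually_reachable A D \<longrightarrow> D = C)"

definition well_behaved :: "('s, 'b) aut \<Rightarrow> bool" where
  "well_behaved A \<longleftrightarrow>
     (\<forall>C. is_scc A C \<and> (\<exists>q\<in>C. reach A (init A) q) \<longrightarrow>
        (\<forall>q\<in>C. \<forall>u v. length u = length v \<and> run A q u \<in> C \<and> run A q v \<in> C \<longrightarrow>
            (run A q u \<in> acc A \<longleftrightarrow> run A q v \<in> acc A)))"

text \<open>States are represented by natural numbers (the state set is
  countable since it injects into bit strings).\<close>
definition streaming_alg :: "(nat, 'b) aut \<Rightarrow> (nat \<Rightarrow> bool list) \<Rightarrow> bool" where
  "streaming_alg A enc \<longleftrightarrow> wf_aut A \<and> inj_on enc (states A)"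

definition O_log :: "(nat \<Rightarrow> enat) \<Rightarrow> bool" where
  "O_log s \<longleftrightarrow> (\<exists>c::real. \<exists>N. \<forall>n\<ge>N. \<exists>k. s n = enat k \<and> real k \<le> c * log 2 (real n))"

definition last_n :: "'b \<Rightarrow> nat \<Rightarrow> 'b list \<Rightarrow> 'b list" where
  "last_n a n w = (if n \<le> length w then drop (length w - n) w
                   else replicate (n - length w) a @ w)"

definition space_fixed :: "(nat, 'b) aut \<Rightarrow> (nat \<Rightarrow> bool list) \<Rightarrow> enat" where
  "space_fixed A enc = Sup ((\<lambda>q. enat (length (enc q))) ` states A)"

definition fixed_sw_alg :: "'b \<Rightarrow> 'b list set \<Rightarrow> (nat \<Rightarrow> (nat, 'b) aut) \<Rightarrow> (nat \<Rightarrow> nat \<Rightarrow> bool list) \<Rightarrow> bool" where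
  "fixed_sw_alg a L As encs \<longleftrightarrow>
     (\<forall>n. streaming_alg (As n) (encs n) \<and> lang (As n) = {w. last_n a n w \<in> L})"

definition F_log :: "'b \<Rightarrow> 'b list set \<Rightarrow> bool" where
  "F_log a L \<longleftrightarrow> (\<exists>As encs. fixed_sw_alg a L As encs \<and>
                     O_log (\<lambda>n. space_fixed (As n) (encs n)))"

text \<open>Input symbols: Some b for b in Sigma, None for the pop symbol.\<close>
definition window :: "'b option list \<Rightarrow> 'b list" where
  "window u = foldl (\<lambda>wd x. case x of Some b \<Rightarrow> wd @ [b] | None \<Rightarrow> tl wd) [] u"

definition var_sw_alg :: "'b list set \<Rightarrow> (nat, 'b option) aut \<Rightarrow> (nat \<Rightarrow> bool list) \<Rightarrow> bool" where
  "var_sw_alg L A enc \<longleftrightarrow> streaming_alg A enc \<and> lang A = {u. window u \<in> L}"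

text \<open>Space at n: maximal encoding length of a state visited on a stream during
  which the window length never exceeds n.\<close>
definition space_var :: "(nat, 'b option) aut \<Rightarrow> (nat \<Rightarrow> bool list) \<Rightarrow> nat \<Rightarrow> enat" where
  "space_var A enc n = Sup ((\<lambda>u. enat (length (enc (run A (init A) u)))) `
      {u. \<forall>v. (\<exists>x. u = v @ x) \<longrightarrow> length (window v) \<le> n})"

definition V_log :: "'b list set \<Rightarrow> bool" where
  "V_log L \<longleftrightarrow> (\<exists>A enc. var_sw_alg L A enc \<and> O_log (space_var A enc))"

end

theory Submission
  imports Defs "HOL-Library.Nat_Bijection" "HOL-Library.Log_Nat" "HOL-Real_Asymp.Real_Asymp"
begin

text \<open>Let \<open>D\<close> be a well-behaved DFA for the reversal of \<open>L\<close>. Reading a window backwards, \<open>D\<close>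
  stays in each SCC during an interval of positions, and inside an SCC acceptance depends only on
  the state of entry and the distance travelled. So whether a suffix of the window, followed by an
  arbitrary continuation, lies in \<open>L\<close> is determined by the first and last positions and the entry
  state of every SCC along every run of \<open>D\<close> on the reversed window. These are polynomially many
  data in the window length \<open>n\<close>, so the classes of indistinguishable windows get numbers of
  polynomial size, and both sliding window algorithms store \<open>O(log n)\<close> bits.

  Conversely, a violation of well-behavedness gives two loops \<open>P\<close>, \<open>Q\<close> of equal length at a
  reachable state that disagree on acceptance after the same number of letters. Reversed
  concatenations of \<open>k\<close> blocks from \<open>{P, Q}\<close> can then be told apart by windows of length \<open>O(k)\<close>,
  so \<open>2^k\<close> distinct states, and hence codes of length \<open>k\<close>, are needed.\<close>

lemma run_Nil [simp]: "run A q [] = q"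
  by (simp add: run_def)

lemma run_Cons [simp]: "run A q (b # w) = run A (trans A q b) w"
  by (simp add: run_def)

lemma run_append: "run A q (u @ v) = run A (run A q u) v"
  by (simp add: run_def)

lemma run_in_states: "wf_aut A \<Longrightarrow> q \<in> states A \<Longrightarrow> run A q w \<in> states A"
  by (induction w arbitrary: q) (auto simp: wf_aut_def)

lemma run_init_in_states: "wf_aut A \<Longrightarrow> run A (init A) w \<in> states A"
  by (simp add: run_in_states wf_aut_def)

lemma reach_refl [simp]: "reach A p p"
  unfolding reach_def by (metis run_Nil)

lemma reach_run [simp]: "reach A p (run A p w)"
  unfolding reach_def by blast

lemma reach_trans: "reach A p q \<Longrightarrow> reach A q r \<Longrightarrow> reach A p r"
  unfolding reach_def by (metis run_append)

lemma mem_lang_rev_lang_iff: "lang D = rev_lang L \<Longrightarrow> x \<in> L \<longleftrightarrow> run D (init D) (rev x) \<in> acc D"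
  by (metis lang_def mem_Collect_eq rev_lang_def rev_rev_ident image_iff)

fun bin :: "nat \<Rightarrow> bool list" where
  "bin n = (if n = 0 then [] else odd n # bin (n div 2))"

declare bin.simps [simp del]

definition unbin :: "bool list \<Rightarrow> nat" where
  "unbin bs = foldr (\<lambda>b r. of_bool b + 2 * r) bs 0"

lemma unbin_bin [simp]: "unbin (bin n) = n"
  by (induction n rule: bin.induct) (subst bin.simps, simp add: unbin_def)

lemma inj_bin: "inj bin"
  by (rule inj_on_inverseI[of _ unbin]) simp

lemma length_bin: "length (bin n) = floorlog 2 n"
  by (induction n rule: bin.induct) (subst bin.simps, subst compute_floorlog, simp)

lemma floorlog_le_log: "real (floorlog 2 n) \<le> log 2 n + 1"
proof (cases "n = 0")
  case False
  then have "2 ^ (floorlog 2 n - 1) \<le> n"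
    using floorlog_bounds[of n 2] by simp
  then have "real (floorlog 2 n - 1) \<le> log 2 n"
    using False le_log_of_power[of 2 "floorlog 2 n - 1" n] by simp
  then show ?thesis by linarith
qed (simp add: floorlog_def log_def)

lemma exists_long_code:
  fixes enc :: "'a \<Rightarrow> bool list"
  assumes inj: "inj_on enc T" and card: "card T = 2 ^ k"
  shows "\<exists>t\<in>T. k \<le> length (enc t)"
proof (rule ccontr)
  assume short: "\<not> ?thesis"
  have "T \<noteq> {}" and "finite T"
    using card by (auto intro: card_ge_0_finite)
  with short have "k > 0" by force
  have "enc ` T \<subseteq> {bs. set bs \<subseteq> UNIV \<and> length bs \<le> k - 1}"
    using short by force
  then have "card (enc ` T) \<le> card {bs :: bool list. set bs \<subseteq> UNIV \<and> length bs \<le> k - 1}"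
    by (rule card_mono[OF finite_lists_length_le[OF finite_UNIV]])
  also have "\<dots> = (\<Sum>i\<le>k - 1. 2 ^ i)"
    using card_lists_length_le[of "UNIV :: bool set" "k - 1"] by (simp add: card_UNIV_bool)
  also have "(\<Sum>i\<le>k - 1. (2::nat) ^ i) = 2 ^ k - 1"
    using \<open>k > 0\<close> sum_power2[of k] by (simp add: atLeast0LessThan lessThan_Suc_atMost[symmetric])
  also have "\<dots> < 2 ^ k"
    by simp
  finally show False
    using card inj by (simp add: card_image)
qed

lemma O_log_mono:
  assumes f: "O_log f" and le: "\<And>n. g n \<le> f n"
  shows "O_log g"
proof -
  obtain c N where cN: "\<forall>n\<ge>N. \<exists>k. f n = enat k \<and> real k \<le> c * log 2 (real n)"
    using f unfolding O_log_def by blast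
  have "\<exists>k. g n = enat k \<and> real k \<le> c * log 2 (real n)" if n: "N \<le> n" for n
  proof -
    obtain k where k: "f n = enat k" "real k \<le> c * log 2 (real n)"
      using cN n by blast
    moreover obtain k' where "g n = enat k'" "k' \<le> k"
      using le[of n] k by (metis enat_ile enat_ord_simps(1))
    ultimately show ?thesis by force
  qed
  then show ?thesis
    unfolding O_log_def by blast
qed

lemma O_log_floorlog_poly:
  assumes bound: "\<And>n. f n \<le> (c * (n + d)) ^ e"
  shows "O_log (\<lambda>n. enat (floorlog 2 (f n)))"
proof -
  have "real (floorlog 2 (f n)) \<le> real (2 * e + 1) * log 2 n" if n: "max 2 (c + d) \<le> n" for n
  proof -
    have "c * (n + d) \<le> (c + d) * n"
      using n by (simp add: algebra_simps)
    also have "\<dots> \<le> n * n"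
      using n by simp
    finally have "c * (n + d) \<le> n * n" .
    then have "f n \<le> n ^ (2 * e)"
      using bound[of n] by (metis le_trans power_mono power_mult power2_eq_square zero_le)
    then have "floorlog 2 (f n) \<le> floorlog 2 (n ^ (2 * e))"
      by (rule floorlog_mono)
    then have "real (floorlog 2 (f n)) \<le> log 2 (real n ^ (2 * e)) + 1"
      using floorlog_le_log[of "n ^ (2 * e)"] by simp
    also have "\<dots> \<le> (2 * e + 1) * log 2 n"
      using n by (simp add: log_nat_power algebra_simps)
    finally show ?thesis
      by simp
  qed
  then show ?thesis
    unfolding O_log_def by blast
qed

lemma not_O_log_if_linear_witnesses:
  assumes "m > 0" and witness: "\<And>k. \<exists>n. k \<le> Suc n \<and> n \<le> m * k + d \<and> enat k \<le> s n"
  shows "\<not> O_log s"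
proof
  assume "O_log s"
  then obtain c N where cN: "\<forall>n\<ge>N. \<exists>j. s n = enat j \<and> real j \<le> c * log 2 (real n)"
    unfolding O_log_def by blast
  define c' where "c' = max c 0"
  have "filterlim (\<lambda>k::nat. real k - c' * log 2 (real m * real k + real d)) at_top at_top"
    using \<open>m > 0\<close> by real_asymp
  then have "eventually (\<lambda>k. N + 2 \<le> k \<and> 1 \<le> real k - c' * log 2 (real m * real k + real d))
      sequentially"
    using eventually_ge_at_top[of "N + 2"] unfolding filterlim_at_top by (auto intro: eventually_conj)
  then obtain k where k: "N + 2 \<le> k" "c' * log 2 (real m * real k + real d) < real k"
    by (auto simp: eventually_sequentially)
  obtain n where n: "k \<le> Suc n" "n \<le> m * k + d" "enat k \<le> s n"
    using witness by blast
  have "N \<le> n"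
    using n k by linarith
  then obtain j where j: "s n = enat j" "real j \<le> c * log 2 (real n)"
    using cN by blast
  have "0 < n"
    using n k by linarith
  have "real n \<le> real (m * k + d)"
    using n(2) by (simp only: of_nat_le_iff)
  then have "real n \<le> real m * real k + real d"
    by simp
  then have "log 2 n \<le> log 2 (real m * real k + real d)"
    using \<open>0 < n\<close> by simp
  have "real k \<le> c * log 2 (real n)"
    using n j by simp
  also have "\<dots> \<le> c' * log 2 (real n)"
    using \<open>0 < n\<close> by (intro mult_right_mono) (auto simp: c'_def)
  also have "\<dots> \<le> c' * log 2 (real m * real k + real d)"
    using \<open>log 2 n \<le> _\<close> by (intro mult_left_mono) (auto simp: c'_def)
  finally show False
    using k by simp
qed

lemma two_mult_prod_encode: "2 * prod_encode (x, y) = (x + y) * Suc (x + y) + 2 * x"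
  by (simp add: prod_encode_def triangle_def)

lemma prod_encode_bound:
  assumes x: "2 * (x + 2) \<le> Y" and y: "2 * (y + 2) \<le> Y"
  shows "2 * (Suc (prod_encode (x, y)) + 2) \<le> Y ^ 2"
proof -
  have "2 * (Suc (prod_encode (x, y)) + 2) = (x + y) * Suc (x + y) + (2 * x + 6)"
    using two_mult_prod_encode[of x y] by simp
  also have "\<dots> \<le> (Y - 4) * Y + 4 * Y"
    using x y by (intro add_mono mult_le_mono) auto
  also have "\<dots> = Y ^ 2"
    using x by (simp add: power2_eq_square diff_mult_distrib)
  finally show ?thesis .
qed

lemma list_encode_bound:
  "\<forall>a\<in>set xs. a \<le> B \<Longrightarrow> 2 * (list_encode xs + 2) \<le> (2 * (B + 2)) ^ 2 ^ length xs"
proof (induction xs)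
  case (Cons x xs)
  let ?Y = "(2 * (B + 2)) ^ 2 ^ length xs"
  have "2 * (B + 2) \<le> ?Y"
    by (rule self_le_power) simp_all
  then have "2 * (x + 2) \<le> ?Y"
    using Cons.prems by simp
  moreover have "2 * (list_encode xs + 2) \<le> ?Y"
    using Cons by simp
  ultimately have "2 * (list_encode (x # xs) + 2) \<le> ?Y ^ 2"
    unfolding list_encode.simps by (rule prod_encode_bound)
  then show ?case
    by (simp add: power_mult[symmetric] mult.commute)
qed simp

section \<open>Indistinguishable windows\<close>

text \<open>Every later window of a stream consists of a suffix of the current window followed by newer
  letters, so equivalent windows cannot be separated by any continuation of the stream.\<close>
definition window_equiv :: "'a list set \<Rightarrow> 'a list \<Rightarrow> 'a list \<Rightarrow> bool" where
  "window_equiv L x y \<longleftrightarrow> length x = length y \<and>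
     (\<forall>k\<le>length x. \<forall>z. drop k x @ z \<in> L \<longleftrightarrow> drop k y @ z \<in> L)"

lemma window_equiv_refl: "window_equiv L x x"
  by (simp add: window_equiv_def)

lemma window_equiv_sym: "window_equiv L x y \<Longrightarrow> window_equiv L y x"
  by (simp add: window_equiv_def)

lemma window_equiv_trans: "window_equiv L x y \<Longrightarrow> window_equiv L y z \<Longrightarrow> window_equiv L x z"
  by (simp add: window_equiv_def)

lemma window_equiv_mem: "window_equiv L x y \<Longrightarrow> x \<in> L \<longleftrightarrow> y \<in> L"
  unfolding window_equiv_def by (metis append_Nil2 drop0 le0)

lemma window_equiv_snoc:
  assumes "window_equiv L x y"
  shows "window_equiv L (x @ [b]) (y @ [b])"
  unfolding window_equiv_def
proof (intro conjI allI impI)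
  show "length (x @ [b]) = length (y @ [b])"
    using assms by (simp add: window_equiv_def)
  fix k z
  assume "k \<le> length (x @ [b])"
  then consider "k \<le> length x" | "k = Suc (length x)"
    by fastforce
  then show "drop k (x @ [b]) @ z \<in> L \<longleftrightarrow> drop k (y @ [b]) @ z \<in> L"
  proof cases
    case 1
    then have "drop k x @ [b] @ z \<in> L \<longleftrightarrow> drop k y @ [b] @ z \<in> L"
      using assms by (simp add: window_equiv_def)
    then show ?thesis
      using 1 assms by (simp add: window_equiv_def)
  next
    case 2
    then show ?thesis
      using assms by (simp add: window_equiv_def)
  qed
qed

lemma window_equiv_tl:
  assumes "window_equiv L x y"
  shows "window_equiv L (tl x) (tl y)"
  unfolding window_equiv_def
proof (intro conjI allI impI)
  show "length (tl x) = length (tl y)"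
    using assms by (simp add: window_equiv_def)
  fix k z
  assume "k \<le> length (tl x)"
  then have "Suc k \<le> length x \<or> x = [] \<and> y = []"
    using assms by (cases x) (auto simp: window_equiv_def)
  then have "drop (Suc k) x @ z \<in> L \<longleftrightarrow> drop (Suc k) y @ z \<in> L"
    using assms by (auto simp: window_equiv_def)
  then show "drop k (tl x) @ z \<in> L \<longleftrightarrow> drop k (tl y) @ z \<in> L"
    by (simp add: drop_Suc)
qed

definition window_step :: "'a list \<Rightarrow> 'a option \<Rightarrow> 'a list" where
  "window_step x c = (case c of Some b \<Rightarrow> x @ [b] | None \<Rightarrow> tl x)"

lemma window_foldl: "window u = foldl window_step [] u"
  unfolding window_def window_step_def ..

lemma window_equiv_window_step:
  "window_equiv L x y \<Longrightarrow> window_equiv L (window_step x c) (window_step y c)"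
  by (cases c) (simp_all add: window_step_def window_equiv_snoc window_equiv_tl)

lemma last_n_snoc: "last_n a n (w @ [b]) = tl (last_n a n w @ [b])"
proof (cases "n \<le> length w")
  case True
  show ?thesis
  proof (cases "n = 0")
    case False
    with True have "drop (length w - n) w \<noteq> []"
      by simp
    then have "tl (drop (length w - n) w @ [b]) = tl (drop (length w - n) w) @ [b]"
      by simp
    also have "\<dots> = drop (Suc (length w - n)) w @ [b]"
      by (simp add: drop_Suc drop_tl)
    finally show ?thesis
      using True False by (simp add: last_n_def Suc_diff_le)
  qed (simp add: last_n_def)
next
  case False
  then show ?thesis
    by (cases "n - length w") (auto simp: last_n_def Suc_diff_le)
qed

lemma last_n_foldl: "last_n a n w = foldl (\<lambda>x b. tl (x @ [b])) (replicate n a) w"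
  by (induction w rule: rev_induct) (simp add: last_n_def, simp add: last_n_snoc)

locale polynomial_window_code =
  fixes L :: "'a list set" and code :: "'a list \<Rightarrow> nat" and c d e :: nat
  assumes code_eq_imp_window_equiv: "code x = code y \<Longrightarrow> window_equiv L x y"
    and code_le: "code x \<le> (c * (length x + d)) ^ e"
begin

text \<open>The least code of a window equivalent to \<open>x\<close>: a canonical number for the class of \<open>x\<close> that
  still obeys the polynomial bound.\<close>
definition class_code :: "'a list \<Rightarrow> nat" where
  "class_code x = (LEAST v. \<exists>y. window_equiv L y x \<and> v = code y)"

lemma class_code_le_code: "class_code x \<le> code x"
  unfolding class_code_def by (rule Least_le) (blast intro: window_equiv_refl)

lemma class_code_le: "length x \<le> n \<Longrightarrow> class_code x \<le> (c * (n + d)) ^ e"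
  by (meson class_code_le_code code_le add_le_mono1 le_trans mult_le_mono2 power_mono zero_le)

lemma class_code_eq_iff: "class_code x = class_code y \<longleftrightarrow> window_equiv L x y"
proof
  have class_code_eq_code: "\<exists>y'. window_equiv L y' y \<and> class_code y = code y'" for y
    unfolding class_code_def by (rule LeastI_ex) (blast intro: window_equiv_refl)
  assume "class_code x = class_code y"
  with class_code_eq_code[of x] class_code_eq_code[of y] show "window_equiv L x y"
    by (metis code_eq_imp_window_equiv window_equiv_sym window_equiv_trans)
next
  assume "window_equiv L x y"
  then have "(\<lambda>v. \<exists>z. window_equiv L z x \<and> v = code z) = (\<lambda>v. \<exists>z. window_equiv L z y \<and> v = code z)"
    by (meson window_equiv_sym window_equiv_trans)
  then show "class_code x = class_code y"
    unfolding class_code_def by simp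
qed

lemma class_code_mem_image_iff: "class_code x \<in> class_code ` L \<longleftrightarrow> x \<in> L"
  using class_code_eq_iff window_equiv_mem by blast

definition class_repr :: "nat \<Rightarrow> 'a list" where
  "class_repr v = (SOME x. class_code x = v)"

lemma class_code_step:
  assumes "\<And>x y. window_equiv L x y \<Longrightarrow> window_equiv L (f x) (f y)"
  shows "class_code (f (class_repr (class_code x))) = class_code (f x)"
proof -
  have "class_code (class_repr (class_code x)) = class_code x"
    unfolding class_repr_def by (rule someI) (rule refl)
  then show ?thesis
    using assms class_code_eq_iff by blast
qed

definition fixed_aut :: "'a \<Rightarrow> nat \<Rightarrow> (nat, 'a) aut" where
  "fixed_aut a n = \<lparr>states = class_code ` {x. length x = n}, init = class_code (replicate n a),
     trans = (\<lambda>v b. class_code (tl (class_repr v @ [b]))),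
     acc = class_code ` L \<inter> class_code ` {x. length x = n}\<rparr>"

lemma run_fixed_aut:
  "run (fixed_aut a n) (class_code x) w = class_code (foldl (\<lambda>x b. tl (x @ [b])) x w)"
proof (induction w arbitrary: x)
  case (Cons b w)
  have "trans (fixed_aut a n) (class_code x) b = class_code (tl (x @ [b]))"
    unfolding fixed_aut_def
    using class_code_step[of "\<lambda>x. tl (x @ [b])"] by (simp add: window_equiv_snoc window_equiv_tl)
  then show ?case
    using Cons by simp
qed simp

lemma fixed_sw_alg: "fixed_sw_alg a L (fixed_aut a) (\<lambda>_. bin)"
  unfolding fixed_sw_alg_def streaming_alg_def
proof (intro allI conjI)
  fix n
  show "wf_aut (fixed_aut a n)"
    unfolding wf_aut_def
  proof (intro conjI ballI allI)
    fix q b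
    assume "q \<in> states (fixed_aut a n)"
    then obtain x where "length x = n" "q = class_code x"
      by (auto simp: fixed_aut_def)
    then show "trans (fixed_aut a n) q b \<in> states (fixed_aut a n)"
      using run_fixed_aut[of a n x "[b]"] by (simp add: fixed_aut_def)
  qed (auto simp: fixed_aut_def)
  show "inj_on bin (states (fixed_aut a n))"
    using inj_bin by (rule inj_on_subset) simp
  have "run (fixed_aut a n) (init (fixed_aut a n)) w = class_code (last_n a n w)" for w
    using run_fixed_aut[of a n "replicate n a" w] by (simp add: fixed_aut_def last_n_foldl)
  moreover have "class_code (last_n a n w) \<in> class_code ` {x. length x = n}" for w
    by (simp add: last_n_def)
  ultimately show "lang (fixed_aut a n) = {w. last_n a n w \<in> L}"
    unfolding lang_def by (simp add: fixed_aut_def class_code_mem_image_iff)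
qed

lemma space_fixed_aut: "space_fixed (fixed_aut a n) bin \<le> enat (floorlog 2 ((c * (n + d)) ^ e))"
  unfolding space_fixed_def
proof (rule Sup_least)
  fix s
  assume "s \<in> (\<lambda>q. enat (length (bin q))) ` states (fixed_aut a n)"
  then obtain x where "length x = n" "s = enat (length (bin (class_code x)))"
    by (auto simp: fixed_aut_def)
  then show "s \<le> enat (floorlog 2 ((c * (n + d)) ^ e))"
    by (simp add: length_bin floorlog_mono class_code_le)
qed

theorem F_log: "F_log a L"
proof -
  have "O_log (\<lambda>n. space_fixed (fixed_aut a n) bin)"
    by (rule O_log_mono[OF O_log_floorlog_poly[of "\<lambda>n. (c * (n + d)) ^ e" c d e] space_fixed_aut]) simp
  then show ?thesis
    unfolding F_log_def using fixed_sw_alg by blast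
qed

definition var_aut :: "(nat, 'a option) aut" where
  "var_aut = \<lparr>states = range class_code, init = class_code [],
     trans = (\<lambda>v c. class_code (window_step (class_repr v) c)), acc = class_code ` L\<rparr>"

lemma run_var_aut: "run var_aut (class_code x) u = class_code (foldl window_step x u)"
proof (induction u arbitrary: x)
  case (Cons c u)
  have "trans var_aut (class_code x) c = class_code (window_step (class_repr (class_code x)) c)"
    by (simp add: var_aut_def)
  also have "\<dots> = class_code (window_step x c)"
    by (rule class_code_step) (rule window_equiv_window_step)
  finally have "trans var_aut (class_code x) c = class_code (window_step x c)" .
  then show ?case
    using Cons by simp
qed simp

lemma run_var_aut_init: "run var_aut (init var_aut) u = class_code (window u)"
  using run_var_aut[of "[]" u] by (simp add: var_aut_def window_foldl)

lemma var_sw_alg: "var_sw_alg L var_aut bin"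
  unfolding var_sw_alg_def streaming_alg_def
proof (intro conjI)
  show "wf_aut var_aut"
    by (auto simp: wf_aut_def var_aut_def)
  show "inj_on bin (states var_aut)"
    using inj_bin by (rule inj_on_subset) simp
  show "lang var_aut = {u. window u \<in> L}"
    unfolding lang_def run_var_aut_init by (simp add: var_aut_def class_code_mem_image_iff)
qed

lemma space_var_aut: "space_var var_aut bin n \<le> enat (floorlog 2 ((c * (n + d)) ^ e))"
  unfolding space_var_def
proof (rule Sup_least, clarsimp)
  fix u :: "'a option list"
  assume "\<forall>v. (\<exists>x. u = v @ x) \<longrightarrow> length (window v) \<le> n"
  then have "length (window u) \<le> n"
    by (metis append_Nil2)
  then show "length (bin (run var_aut (init var_aut) u)) \<le> floorlog 2 ((c * (n + d)) ^ e)"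
    by (simp add: run_var_aut_init length_bin floorlog_mono class_code_le)
qed

theorem V_log: "V_log L"
proof -
  have "O_log (space_var var_aut bin)"
    by (rule O_log_mono[OF O_log_floorlog_poly[of "\<lambda>n. (c * (n + d)) ^ e" c d e] space_var_aut]) simp
  then show ?thesis
    unfolding V_log_def using var_sw_alg by blast
qed

end

section \<open>Well-behaved DFAs for the reversal\<close>

definition scc_of :: "('s, 'b) aut \<Rightarrow> 's \<Rightarrow> 's set" where
  "scc_of A q = {p. reach A q p \<and> reach A p q}"

lemma is_scc_scc_of:
  assumes "wf_aut A" and "q \<in> states A"
  shows "is_scc A (scc_of A q)"
  unfolding is_scc_def
proof (intro conjI allI impI)
  show "scc_of A q \<subseteq> states A"
    using assms run_in_states by (auto simp: scc_of_def reach_def)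
  show "mutually_reachable A (scc_of A q)"
    unfolding mutually_reachable_def scc_of_def by (blast intro: reach_trans)
  fix C
  assume C: "scc_of A q \<subseteq> C \<and> C \<subseteq> states A \<and> mutually_reachable A C"
  moreover have "q \<in> C"
    using C by (auto simp: scc_of_def)
  ultimately show "C = scc_of A q"
    by (auto simp: scc_of_def mutually_reachable_def)
qed

lemma run_take_drop_take:
  "i \<le> j \<Longrightarrow> run A (run A p (take i r)) (drop i (take j r)) = run A p (take j r)"
  by (metis append_take_drop_id min.absorb1 take_take run_append)

definition visits :: "('s, 'b) aut \<Rightarrow> 'b list \<Rightarrow> 's \<Rightarrow> 's set \<Rightarrow> nat \<Rightarrow> bool" where
  "visits A r p C i \<longleftrightarrow> i \<le> length r \<and> run A p (take i r) \<in> C"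

lemma visits_scc_of_between:
  assumes "visits A r p (scc_of A q) i" and "visits A r p (scc_of A q) j" and "i \<le> k" and "k \<le> j"
  shows "visits A r p (scc_of A q) k"
proof -
  have "reach A (run A p (take i r)) (run A p (take k r))"
    and "reach A (run A p (take k r)) (run A p (take j r))"
    using assms run_take_drop_take by (metis reach_run)+
  moreover have "k \<le> length r"
    using assms by (simp add: visits_def)
  ultimately show ?thesis
    using assms unfolding visits_def scc_of_def by (blast intro: reach_trans)
qed

locale well_behaved_reversal =
  fixes D :: "(nat, 'a) aut" and L :: "'a list set"
  assumes dfa: "dfa D" and well_behaved: "well_behaved D" and lang_D: "lang D = rev_lang L"
begin

lemma wf: "wf_aut D" and finite_states: "finite (states D)"
  using dfa by (auto simp: dfa_def)

text \<open>Well-behavedness makes acceptance inside an SCC depend only on the state in which the run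
  enters it and on the distance travelled since, so these four numbers determine every acceptance
  along the run of \<open>D\<close> from \<open>p\<close> on \<open>r\<close> while it stays in the SCC of \<open>q\<close>.\<close>
definition scc_entry :: "'a list \<Rightarrow> nat \<Rightarrow> nat \<Rightarrow> nat list" where
  "scc_entry r p q = (let V = visits D r p (scc_of D q) in
     if \<exists>i. V i then [1, Least V, Greatest V, run D p (take (Least V) r)] else [0, 0, 0, 0])"

lemma visits_if_scc_entry_eq:
  assumes entry_eq: "scc_entry r p q = scc_entry r' p q" and Vj: "visits D r p (scc_of D q) j"
  defines "i \<equiv> Least (visits D r p (scc_of D q))"
  shows "i \<le> j" and "visits D r p (scc_of D q) i" and "visits D r' p (scc_of D q) j"
    and "run D p (take i r') = run D p (take i r)"
proof -
  let ?V = "visits D r p (scc_of D q)" and ?V' = "visits D r' p (scc_of D q)"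
  define l where "l = Greatest ?V"
  show Vi: "?V i" and ij: "i \<le> j"
    unfolding i_def using Vj by (auto intro: LeastI Least_le)
  have jl: "j \<le> l"
    unfolding l_def using Vj by (rule Greatest_le_nat[of _ _ "length r"]) (simp add: visits_def)
  have "scc_entry r p q = [1, i, l, run D p (take i r)]"
    using Vj by (auto simp: scc_entry_def Let_def i_def l_def)
  then have "scc_entry r' p q = [1, i, l, run D p (take i r)]"
    using entry_eq by simp
  then have V'_ex: "\<exists>i. ?V' i" and i': "i = Least ?V'" and l': "l = Greatest ?V'"
    and "run D p (take i r') = run D p (take i r)"
    by (auto simp: scc_entry_def Let_def split: if_splits)
  then show "run D p (take i r') = run D p (take i r)"
    by simp
  have "?V' i"
    unfolding i' using V'_ex by (auto intro: LeastI)
  moreover have "?V' l"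
    unfolding l' using V'_ex by (metis GreatestI_nat visits_def)
  ultimately show "?V' j"
    using ij jl by (rule visits_scc_of_between)
qed

lemma acc_run_take_eq_if_scc_entry_eq:
  assumes p: "p \<in> states D" "reach D (init D) p"
    and entry_eq: "\<forall>q\<in>states D. scc_entry r p q = scc_entry r' p q"
    and len: "length r = length r'" and j: "j \<le> length r"
  shows "run D p (take j r) \<in> acc D \<longleftrightarrow> run D p (take j r') \<in> acc D"
proof -
  define s where "s = run D p (take j r)"
  define C where "C = scc_of D s"
  define i where "i = Least (visits D r p C)"
  have s: "s \<in> states D"
    using p wf run_in_states s_def by metis
  have Vj: "visits D r p C j"
    using j by (simp add: visits_def C_def s_def scc_of_def)
  note visits = visits_if_scc_entry_eq[of r p s r' j, folded C_def, folded i_def,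
      OF bspec[OF entry_eq s] Vj]
  define e where "e = run D p (take i r)"
  define u where "u = drop i (take j r)"
  define v where "v = drop i (take j r')"
  have run_u: "run D e u = run D p (take j r)"
    unfolding e_def u_def using visits(1) by (rule run_take_drop_take)
  have run_v: "run D e v = run D p (take j r')"
    unfolding e_def v_def visits(4)[symmetric] using visits(1) by (rule run_take_drop_take)
  have "is_scc D C" and "e \<in> C"
    using wf s visits(2) by (auto simp: C_def is_scc_scc_of e_def visits_def)
  moreover have "reach D (init D) s"
    unfolding s_def using p(2) reach_run by (rule reach_trans)
  moreover have "s \<in> C"
    by (simp add: C_def scc_of_def)
  moreover have "length u = length v"
    using len j by (simp add: u_def v_def)
  moreover have "run D e u \<in> C" and "run D e v \<in> C"
    using Vj visits(3) by (simp_all add: run_u run_v visits_def)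
  ultimately have "run D e u \<in> acc D \<longleftrightarrow> run D e v \<in> acc D"
    using well_behaved unfolding well_behaved_def by blast
  then show ?thesis
    by (simp add: run_u run_v)
qed

definition state_pairs :: "(nat \<times> nat) list" where
  "state_pairs = List.product (sorted_list_of_set (states D)) (sorted_list_of_set (states D))"

definition signature :: "'a list \<Rightarrow> nat list" where
  "signature x = length x # concat (map (\<lambda>(p, q). scc_entry (rev x) p q) state_pairs)"

definition code :: "'a list \<Rightarrow> nat" where
  "code x = list_encode (signature x)"

lemma length_scc_entry [simp]: "length (scc_entry r p q) = 4"
  by (simp add: scc_entry_def Let_def)

lemma length_signature: "length (signature x) = Suc (4 * card (states D) ^ 2)"
  by (simp add: signature_def state_pairs_def length_concat comp_def case_prod_beta sum_list_triv
      power2_eq_square)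

lemma mem_drop_append_iff:
  "drop k x @ z \<in> L \<longleftrightarrow> run D (run D (init D) (rev z)) (take (length x - k) (rev x)) \<in> acc D"
  by (simp add: mem_lang_rev_lang_iff[OF lang_D] rev_drop run_append)

lemma signature_eq_imp_window_equiv:
  assumes eq: "signature x = signature y"
  shows "window_equiv L x y"
proof -
  have len: "length x = length y"
    using eq by (simp add: signature_def)
  have "map (\<lambda>(p, q). scc_entry (rev x) p q) state_pairs = map (\<lambda>(p, q). scc_entry (rev y) p q) state_pairs"
    using eq by (intro concat_injective) (auto simp: signature_def set_zip case_prod_beta)
  then have entries: "\<forall>q\<in>states D. scc_entry (rev x) p q = scc_entry (rev y) p q"
    if "p \<in> states D" for p
    using that finite_states by (auto simp: map_eq_conv state_pairs_def)
  show ?thesis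
    unfolding window_equiv_def
  proof (intro conjI allI impI len)
    fix k z
    assume "k \<le> length x"
    define p where "p = run D (init D) (rev z)"
    have "p \<in> states D" and "reach D (init D) p"
      using wf by (simp_all add: p_def run_init_in_states)
    then show "drop k x @ z \<in> L \<longleftrightarrow> drop k y @ z \<in> L"
      unfolding mem_drop_append_iff p_def[symmetric] len
      using acc_run_take_eq_if_scc_entry_eq entries len by simp
  qed
qed

lemma scc_entry_le:
  assumes "p \<in> states D" and "a \<in> set (scc_entry r p q)"
  shows "a \<le> length r + Max (states D) + 1"
proof (cases "\<exists>i. visits D r p (scc_of D q) i")
  case True
  let ?V = "visits D r p (scc_of D q)"
  have "Least ?V \<le> length r" and "Greatest ?V \<le> length r"
    using True by (metis LeastI_ex visits_def, metis GreatestI_nat visits_def)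
  moreover have "run D p w \<le> Max (states D)" for w
    using finite_states run_in_states[OF wf assms(1)] by simp
  ultimately show ?thesis
    using assms(2) True by (auto simp: scc_entry_def Let_def intro: le_SucI trans_le_add1 trans_le_add2)
next
  case False
  then show ?thesis
    using assms(2) by (simp add: scc_entry_def Let_def if_not_P[OF False])
qed

lemma code_le:
  "code x \<le> (2 * (length x + (Max (states D) + 3))) ^ 2 ^ Suc (4 * card (states D) ^ 2)"
proof -
  have "\<forall>a\<in>set (signature x). a \<le> length x + Max (states D) + 1"
    using scc_entry_le finite_states by (fastforce simp: signature_def state_pairs_def)
  moreover have "length x + Max (states D) + 1 + 2 = length x + (Max (states D) + 3)"
    by simp
  ultimately have "2 * (code x + 2) \<le> (2 * (length x + (Max (states D) + 3))) ^ 2 ^ length (signature x)"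
    unfolding code_def using list_encode_bound by metis
  then show ?thesis
    by (simp add: length_signature)
qed

sublocale polynomial_window_code L code 2 "Max (states D) + 3" "2 ^ Suc (4 * card (states D) ^ 2)"
  by unfold_locales (simp add: code_def list_encode_eq signature_eq_imp_window_equiv, rule code_le)

end

section \<open>Violations of well-behavedness\<close>

lemma window_append_map_Some: "foldl window_step x (map Some y) = x @ y"
  by (induction y arbitrary: x) (simp_all add: window_step_def)

lemma window_append_replicate_None: "foldl window_step x (replicate p None) = drop p x"
  by (induction p arbitrary: x) (simp_all add: window_step_def drop_Suc)

lemma window_stream: "window (map Some y @ replicate p None) = drop p y"
  by (simp add: window_foldl window_append_map_Some window_append_replicate_None)

lemma space_ge_if_inj_states:
  fixes enc :: "nat \<Rightarrow> bool list"
  assumes "inj_on st {bs :: bool list. length bs = k}" and "st ` {bs. length bs = k} \<subseteq> S"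
    and "inj_on enc S"
  shows "\<exists>bs. length bs = k \<and> k \<le> length (enc (st bs))"
proof -
  have "card (st ` {bs :: bool list. length bs = k}) = 2 ^ k"
    using assms(1) card_lists_length_eq[of "UNIV :: bool set" k] by (simp add: card_image card_UNIV_bool)
  moreover have "inj_on enc (st ` {bs. length bs = k})"
    using assms(3,2) by (rule inj_on_subset)
  ultimately show ?thesis
    using exists_long_code by fastforce
qed

locale acceptance_conflict =
  fixes D :: "(nat, 'a) aut" and L :: "'a list set" and z P Q :: "'a list" and l :: nat and q :: nat
  assumes lang_D: "lang D = rev_lang L"
    and run_z: "run D (init D) z = q"
    and length_Q: "length Q = length P" and l_le: "l \<le> length P"
    and loop_P: "run D q P = q" and loop_Q: "run D q Q = q"
    and conflict: "(run D q (take l P) \<in> acc D) \<noteq> (run D q (take l Q) \<in> acc D)"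
begin

abbreviation m :: nat where "m \<equiv> length P"

definition block :: "bool \<Rightarrow> 'a list" where
  "block b = (if b then P else Q)"

definition blocks :: "bool list \<Rightarrow> 'a list" where
  "blocks bs = concat (map block bs)"

definition pad :: "nat \<Rightarrow> 'a list" where
  "pad c = rev (z @ concat (replicate c P))"

definition window_length :: "nat \<Rightarrow> nat" where
  "window_length k = length z + (k - 1) * m + l"

lemma m_pos: "0 < m"
  using conflict length_Q by (metis le_zero_eq length_greater_0_conv l_le take_eq_Nil)

lemma length_block [simp]: "length (block b) = m"
  using length_Q by (simp add: block_def)

lemma length_blocks [simp]: "length (blocks bs) = length bs * m"
  by (induction bs) (simp_all add: blocks_def)

lemma run_blocks: "run D q (blocks bs) = q"
  by (induction bs) (simp_all add: blocks_def run_append block_def loop_P loop_Q)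

lemma run_replicate_P: "run D q (concat (replicate c P)) = q"
  by (induction c) (simp_all add: run_append loop_P)

lemma take_blocks:
  "i < length bs \<Longrightarrow> take (i * m + l) (blocks bs) = blocks (take i bs) @ take l (block (bs ! i))"
proof (induction bs arbitrary: i)
  case (Cons b bs)
  then show ?case
    using l_le by (cases i) (simp_all add: blocks_def take_append)
qed simp

definition final_window :: "nat \<Rightarrow> bool list \<Rightarrow> nat \<Rightarrow> 'a list" where
  "final_window k bs c = (let w = rev (blocks bs) @ pad c in drop (length w - window_length k) w)"

lemma window_length_le_length:
  "length bs = k \<Longrightarrow> 0 < k \<Longrightarrow> window_length k \<le> length (rev (blocks bs) @ pad c)"
  using l_le by (cases k) (auto simp: window_length_def pad_def length_concat sum_list_replicate)

lemma window_length_bounds: "k \<le> Suc (window_length k)" "window_length k \<le> m * k + (length z + l)"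
proof -
  have "(k - 1) * 1 \<le> (k - 1) * m"
    using m_pos by (intro mult_le_mono2) linarith
  then show "k \<le> Suc (window_length k)"
    unfolding window_length_def by linarith
  have "(k - 1) * m \<le> m * k"
    by (simp add: mult.commute)
  then show "window_length k \<le> m * k + (length z + l)"
    unfolding window_length_def by linarith
qed

text \<open>Read backwards by \<open>D\<close>, this window passes through \<open>q\<close> after \<open>z\<close>, the padding loops and
  the first \<open>i\<close> blocks, and then ends \<open>l\<close> letters into block \<open>i\<close>.\<close>
lemma final_window_mem_iff:
  assumes "length bs = k" and "i < k"
  shows "final_window k bs (k - 1 - i) \<in> L \<longleftrightarrow> run D q (take l (block (bs ! i))) \<in> acc D"
proof -
  define c where "c = k - 1 - i"
  define w where "w = rev (blocks bs) @ pad c"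
  have k: "(k - 1) * m = c * m + i * m"
    using assms(2) by (simp add: c_def add_mult_distrib[symmetric])
  have "window_length k \<le> length w"
    unfolding w_def using assms by (intro window_length_le_length) simp_all
  then have "rev (final_window k bs c) = take (window_length k) (rev w)"
    unfolding final_window_def Let_def w_def[symmetric] by (simp add: rev_drop)
  also have "\<dots> = z @ concat (replicate c P) @ take (i * m + l) (blocks bs)"
    unfolding window_length_def k w_def c_def pad_def
    by (simp add: take_append length_concat sum_list_replicate)
  also have "\<dots> = z @ concat (replicate c P) @ blocks (take i bs) @ take l (block (bs ! i))"
    using take_blocks[of i bs] assms by simp
  finally show ?thesis
    unfolding c_def
    by (simp add: mem_lang_rev_lang_iff[OF lang_D] run_append run_z run_replicate_P run_blocks)
qed

lemma final_windows_separate: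
  assumes "length bs = k" and "length bs' = k" and "bs \<noteq> bs'"
  shows "\<exists>c. (final_window k bs c \<in> L) \<noteq> (final_window k bs' c \<in> L)"
proof -
  obtain i where i: "i < k" "bs ! i \<noteq> bs' ! i"
    using assms by (auto simp: list_eq_iff_nth_eq)
  then have "(run D q (take l (block (bs ! i))) \<in> acc D) \<noteq> (run D q (take l (block (bs' ! i))) \<in> acc D)"
    using conflict by (cases "bs ! i"; cases "bs' ! i") (auto simp: block_def)
  then show ?thesis
    using final_window_mem_iff[OF assms(1) i(1)] final_window_mem_iff[OF assms(2) i(1)] by blast
qed

lemma inj_on_states_fixed:
  assumes lang: "lang A = {w. last_n a (window_length k) w \<in> L}" and "0 < k"
  shows "inj_on (\<lambda>bs. run A (init A) (rev (blocks bs))) {bs. length bs = k}"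
proof (rule inj_onI, rule ccontr)
  fix bs bs'
  assume bs: "bs \<in> {bs. length bs = k}" "bs' \<in> {bs. length bs = k}"
    and same: "run A (init A) (rev (blocks bs)) = run A (init A) (rev (blocks bs'))" and "bs \<noteq> bs'"
  then obtain c where "(final_window k bs c \<in> L) \<noteq> (final_window k bs' c \<in> L)"
    using final_windows_separate by blast
  moreover have last_n: "last_n a (window_length k) (rev (blocks b) @ pad c) = final_window k b c"
    if "length b = k" for b
    using window_length_le_length[OF that \<open>0 < k\<close>] by (simp add: last_n_def final_window_def)
  have "rev (blocks bs) @ pad c \<in> lang A \<longleftrightarrow> rev (blocks bs') @ pad c \<in> lang A"
    using same by (simp add: lang_def run_append)
  then have "final_window k bs c \<in> L \<longleftrightarrow> final_window k bs' c \<in> L"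
    using lang last_n[of bs] last_n[of bs'] bs by simp
  ultimately show False
    by blast
qed

lemma inj_on_states_var:
  assumes lang: "lang A = {u. window u \<in> L}"
  shows "inj_on (\<lambda>bs. run A (init A) (map Some (rev (blocks bs)))) {bs. length bs = k}"
proof (rule inj_onI, rule ccontr)
  fix bs bs'
  assume bs: "bs \<in> {bs. length bs = k}" "bs' \<in> {bs. length bs = k}"
    and same: "run A (init A) (map Some (rev (blocks bs))) = run A (init A) (map Some (rev (blocks bs')))"
    and "bs \<noteq> bs'"
  then obtain c where "(final_window k bs c \<in> L) \<noteq> (final_window k bs' c \<in> L)"
    using final_windows_separate by blast
  moreover define stream where "stream b = map Some (rev (blocks b)) @ map Some (pad c)
    @ replicate (k * m + length (pad c) - window_length k) None" for b
  have window: "window (stream b) = final_window k b c" if "length b = k" for b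
    using window_stream[of "rev (blocks b) @ pad c"] that
    by (simp add: stream_def final_window_def mult.commute)
  have "stream bs \<in> lang A \<longleftrightarrow> stream bs' \<in> lang A"
    using same by (simp add: lang_def stream_def run_append)
  then have "final_window k bs c \<in> L \<longleftrightarrow> final_window k bs' c \<in> L"
    using lang window[of bs] window[of bs'] bs by simp
  ultimately show False
    by blast
qed

theorem not_F_log: "\<not> F_log a L"
proof
  assume "F_log a L"
  then obtain As encs where alg: "fixed_sw_alg a L As encs"
    and space: "O_log (\<lambda>n. space_fixed (As n) (encs n))"
    unfolding F_log_def by blast
  have "enat k \<le> space_fixed (As (window_length k)) (encs (window_length k))" for k
  proof (cases "k = 0")
    case False
    define n where "n = window_length k"
    define st where "st bs = run (As n) (init (As n)) (rev (blocks bs))" for bs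
    have wf: "wf_aut (As n)" and inj_enc: "inj_on (encs n) (states (As n))"
      and lang: "lang (As n) = {w. last_n a n w \<in> L}"
      using alg by (auto simp: fixed_sw_alg_def streaming_alg_def)
    have "inj_on st {bs. length bs = k}"
      unfolding st_def using lang False by (intro inj_on_states_fixed) (simp_all add: n_def)
    moreover have "st ` {bs. length bs = k} \<subseteq> states (As n)"
      using wf by (auto simp: st_def run_init_in_states)
    ultimately obtain bs where "k \<le> length (encs n (st bs))"
      using space_ge_if_inj_states inj_enc by blast
    moreover have "enat (length (encs n (st bs))) \<le> space_fixed (As n) (encs n)"
      unfolding space_fixed_def using wf by (intro SUP_upper) (simp add: st_def run_init_in_states)
    ultimately show ?thesis
      unfolding n_def by (meson enat_ord_simps(1) order_trans)
  qed (simp add: zero_enat_def[symmetric])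
  then have "\<exists>n. k \<le> Suc n \<and> n \<le> m * k + (length z + l) \<and> enat k \<le> space_fixed (As n) (encs n)" for k
    using window_length_bounds by blast
  then show False
    using not_O_log_if_linear_witnesses[OF m_pos] space by metis
qed

lemma window_prefix_le: "map Some (rev (blocks bs)) = v @ x \<Longrightarrow> length (window v) \<le> m * length bs"
proof -
  assume "map Some (rev (blocks bs)) = v @ x"
  then have "v = map Some (take (length v) (rev (blocks bs)))"
    by (metis append_eq_conv_conj take_map)
  then show ?thesis
    using window_stream[of "take (length v) (rev (blocks bs))" 0] by (simp add: mult.commute)
qed

theorem not_V_log: "\<not> V_log L"
proof
  assume "V_log L"
  then obtain A enc where alg: "var_sw_alg L A enc" and space: "O_log (space_var A enc)"
    unfolding V_log_def by blast
  have wf: "wf_aut A" and inj_enc: "inj_on enc (states A)" and lang: "lang A = {u. window u \<in> L}"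
    using alg by (auto simp: var_sw_alg_def streaming_alg_def)
  define st where "st bs = run A (init A) (map Some (rev (blocks bs)))" for bs
  have "enat k \<le> space_var A enc (m * k)" for k
  proof -
    have "st ` {bs. length bs = k} \<subseteq> states A"
      using wf by (auto simp: st_def run_init_in_states)
    then obtain bs where bs: "length bs = k" "k \<le> length (enc (st bs))"
      using space_ge_if_inj_states[OF inj_on_states_var[OF lang]] inj_enc unfolding st_def by blast
    then have "enat (length (enc (st bs))) \<le> space_var A enc (m * k)"
      unfolding space_var_def st_def using window_prefix_le by (intro SUP_upper) blast
    then show ?thesis
      using bs(2) by (meson enat_ord_simps(1) order_trans)
  qed
  moreover have "k \<le> Suc (m * k)" for k
  proof -
    have "1 * k \<le> m * k"
      using m_pos by (intro mult_le_mono1) linarith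
    then show ?thesis
      by linarith
  qed
  ultimately have "\<exists>n. k \<le> Suc n \<and> n \<le> m * k + 0 \<and> enat k \<le> space_var A enc n" for k
    by auto
  then show False
    using not_O_log_if_linear_witnesses[OF m_pos] space by metis
qed

end

lemma acceptance_conflict_if_not_well_behaved:
  assumes "lang D = rev_lang L" and "\<not> well_behaved D"
  obtains z P Q l q where "acceptance_conflict D L z P Q l q"
proof -
  obtain C q0 q u v where C: "is_scc D C" "q0 \<in> C" "reach D (init D) q0" "q \<in> C"
    and uv: "length u = length v" "run D q u \<in> C" "run D q v \<in> C"
    and differ: "(run D q u \<in> acc D) \<noteq> (run D q v \<in> acc D)"
    using assms(2) unfolding well_behaved_def by blast
  have mutual: "mutually_reachable D C"
    using C(1) by (simp add: is_scc_def)
  then obtain z where z: "run D (init D) z = q"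
    using C reach_trans unfolding mutually_reachable_def reach_def by metis
  obtain r1 r2 where r1: "run D (run D q u) r1 = q" and r2: "run D (run D q v) r2 = q"
    using mutual uv C(4) unfolding mutually_reachable_def reach_def by blast
  have "acceptance_conflict D L z ((u @ r1) @ v @ r2) ((v @ r2) @ u @ r1) (length u) q"
    using assms(1) z r1 r2 uv(1) differ by unfold_locales (simp_all add: run_append)
  then show ?thesis
    using that by blast
qed

lemma F_log_and_V_log_if_well_behaved:
  fixes D :: "(nat, 'a) aut"
  assumes "dfa D" and "well_behaved D" and "lang D = rev_lang L"
  shows "F_log a L \<and> V_log L"
proof -
  interpret well_behaved_reversal D L
    using assms by unfold_locales
  show ?thesis
    using F_log V_log by blast
qed

lemma well_behaved_if_F_log_or_V_log:
  fixes D :: "(nat, 'a) aut"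
  assumes "lang D = rev_lang L" and "F_log a L \<or> V_log L"
  shows "well_behaved D"
  using acceptance_conflict_if_not_well_behaved[OF assms(1)] assms(2)
    acceptance_conflict.not_F_log acceptance_conflict.not_V_log by metis

text \<open>Subset construction for the reversal: a state encodes (via \<open>set_encode\<close>) the set of states
  of \<open>A\<close> from which the reversal of the input read so far leads into \<open>acc A\<close>.\<close>
definition rev_aut :: "(nat, 'b) aut \<Rightarrow> (nat, 'b) aut" where
  "rev_aut A = \<lparr>states = set_encode ` Pow (states A), init = set_encode (acc A),
     trans = (\<lambda>v b. set_encode {q \<in> states A. trans A q b \<in> set_decode v}),
     acc = {v \<in> set_encode ` Pow (states A). init A \<in> set_decode v}\<rparr>"

lemma run_rev_aut:
  assumes "dfa A" and "S \<subseteq> states A"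
  shows "run (rev_aut A) (set_encode S) w = set_encode {q \<in> states A. run A q (rev w) \<in> S}"
proof (induction w rule: rev_induct)
  case Nil
  have "{q \<in> states A. q \<in> S} = S"
    using assms(2) by blast
  then show ?case
    by simp
next
  case (snoc b w)
  have "finite {q \<in> states A. run A q (rev w) \<in> S}"
    using assms(1) by (simp add: dfa_def)
  then have "run (rev_aut A) (set_encode S) (w @ [b])
      = set_encode {q \<in> states A. trans A q b \<in> {q \<in> states A. run A q (rev w) \<in> S}}"
    using snoc by (simp add: run_append rev_aut_def)
  also have "{q \<in> states A. trans A q b \<in> {q \<in> states A. run A q (rev w) \<in> S}}
      = {q \<in> states A. run A q (rev (w @ [b])) \<in> S}"
    using assms(1) by (auto simp: dfa_def wf_aut_def)
  finally show ?case .
qed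

lemma dfa_rev_aut: "dfa A \<Longrightarrow> dfa (rev_aut A)"
  by (auto simp: dfa_def wf_aut_def rev_aut_def)

lemma lang_rev_aut:
  assumes "dfa A"
  shows "lang (rev_aut A) = rev_lang (lang A)"
proof (rule set_eqI)
  fix w
  have acc: "acc A \<subseteq> states A" and fin: "finite (states A)"
    using assms by (auto simp: dfa_def wf_aut_def)
  have "run (rev_aut A) (init (rev_aut A)) w = set_encode {q \<in> states A. run A q (rev w) \<in> acc A}"
    using run_rev_aut[OF assms acc] by (simp add: rev_aut_def)
  moreover have "finite {q \<in> states A. run A q (rev w) \<in> acc A}"
    using fin by simp
  moreover have "init A \<in> states A"
    using assms by (simp add: dfa_def wf_aut_def)
  ultimately have "w \<in> lang (rev_aut A) \<longleftrightarrow> rev w \<in> lang A"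
    by (auto simp: lang_def rev_aut_def)
  then show "w \<in> lang (rev_aut A) \<longleftrightarrow> w \<in> rev_lang (lang A)"
    by (metis image_iff rev_lang_def rev_rev_ident)
qed

theorem corollary5p4:
  fixes L :: "('a::finite) list set" and a :: 'a
  assumes "regular L"
  shows "(F_log a L \<longleftrightarrow> (\<exists>D :: (nat, 'a) aut. dfa D \<and> well_behaved D \<and> lang D = rev_lang L))
       \<and> (V_log L \<longleftrightarrow> (\<exists>D :: (nat, 'a) aut. dfa D \<and> well_behaved D \<and> lang D = rev_lang L))"
proof -
  obtain A :: "(nat, 'a) aut" where A: "dfa A" "lang A = L"
    using assms by (auto simp: regular_def)
  then have "dfa (rev_aut A)" and rev: "lang (rev_aut A) = rev_lang L"
    by (simp_all add: dfa_rev_aut lang_rev_aut)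
  moreover have "F_log a L \<or> V_log L \<Longrightarrow> well_behaved (rev_aut A)"
    using rev by (rule well_behaved_if_F_log_or_V_log)
  ultimately show ?thesis
    using F_log_and_V_log_if_well_behaved by metis
qed

end
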